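(* Define, for $f$ analytic near $0$, $(Af)(p)=\sqrt p\,\frac{d}{dp}\int_0^p\frac{f(s)\,ds}{\sqrt{p-s}}$. (i) If $f(p)=\sum_{k\ge0}c_kp^k$ converges in the unit disk $\mathbb D$, then $(Af)(p)=\sqrt\pi\sum_{k\ge0}\frac{\Gamma(k+1)}{\Gamma(k+\frac12)}c_kp^k$, convergent in $\mathbb D$. (ii) If $\mathcal D\supset\mathbb D$ is star-shaped with respect to $0$ and $f$ is analytic in $\mathcal D$, then $Af$ is analytic in $\mathcal D$. (iii) For each $x\in[-1,1]$, $A\big((1-px)^{-1/2}\big)=\frac{1}{1-px}$ for all $p$ with $p^{-1}\notin[-1,1]$. (iv) Consequently, for $\mu$ Hölder continuous on $[-1,1]$ and $Q(p)=\int_{-1}^1\frac{\mu(x)dx}{\sqrt{1-px}}$, one has $(AQ)(p)=\int_{-1}^1\frac{\mu(x)dx}{1-px}$ for $p^{-1}\notin[-1,1]$, and with $\zeta=1/p$, the boundary values $AQ^\pm$ of $\zeta\int_{-1}^1\frac{\mu(x)dx}{\zeta-x}$ on $(-1,0)\cup(0,1)$ from the upper/lower half plane satisfy $AQ^+(x)-AQ^-(x)=-2\pi i\,x\,\mu(x)$.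
   Context: $\sqrt p$ and $(1-px)^{-1/2}$ denote principal branches; the potential $V(z)=\int_{-1}^1\mu(x)(z^2-2zx+1)^{-1/2}dx$ satisfies $V(z)=(z^2+1)^{-1/2}Q(p)$ with $p=2z/(z^2+1)$. *)

theory Defs
  imports "HOL-Complex_Analysis.Complex_Analysis"
begin

definition Iop :: "(complex \<Rightarrow> complex) \<Rightarrow> complex \<Rightarrow> complex" where
  "Iop f p = contour_integral (linepath 0 p) (\<lambda>s. f s / csqrt (p - s))"

text \<open>sqrt p times d/dp of Iop f at p (p nonzero); the derivative is taken along the ray
  through p (it agrees with the complex derivative wherever the latter exists).\<close>
definition Aop0 :: "(complex \<Rightarrow> complex) \<Rightarrow> complex \<Rightarrow> complex" where
  "Aop0 f p = csqrt p * (vector_derivative (\<lambda>r::real. Iop f (complex_of_real r * p)) (at 1) / p)"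

definition Aop :: "(complex \<Rightarrow> complex) \<Rightarrow> complex \<Rightarrow> complex" where
  "Aop f p = (if p = 0 then Lim (at 0) (Aop0 f) else Aop0 f p)"

definition holder_on :: "real set \<Rightarrow> (real \<Rightarrow> real) \<Rightarrow> bool" where
  "holder_on S g \<longleftrightarrow> (\<exists>C \<alpha>. 0 < \<alpha> \<and> \<alpha> \<le> 1 \<and>
      (\<forall>x\<in>S. \<forall>y\<in>S. \<bar>g x - g y\<bar> \<le> C * \<bar>x - y\<bar> powr \<alpha>))"

end

theory Submission
  imports Defs
begin

(* Integrating by parts along the segment [0, q] gives
     int_0^q f(s) (q - s)^(-1/2) ds = sqrt q * G(q),   G(q) = 2 f(0) + 2 q int_0^1 sqrt(1 - t) f'(t q) dt,
   and G is holomorphic on every open domain that is star-shaped with respect to 0 and on which f is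
   holomorphic. Hence A f = G/2 + p G' there, which is (ii). On a power series the factor
   int_0^1 t^n sqrt(1 - t) dt = B(n + 1, 3/2) turns c_k into sqrt pi Gamma(k + 1) / Gamma(k + 1/2) c_k,
   which is (i). These factors are the reciprocals of the Taylor coefficients of (1 - w)^(-1/2), so on
   the unit disc A sends (1 - p x)^(-1/2), and its integral against mu, to the corresponding geometric
   series; analytic continuation to the slit plane gives (iii) and the first half of (iv). For the jump,
     zeta int mu(x) / (zeta - x) dx
       = zeta int (mu(x) - mu(Re zeta)) / (zeta - x) dx + zeta mu(Re zeta) (Ln(zeta + 1) - Ln(zeta - 1)):
   by Hoelder continuity and dominated convergence the first term has the same limit from both sides
   of (-1, 1), while Ln(zeta - 1) jumps by 2 pi i. *)

section \<open>The Abel operator on star-shaped domains\<close>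

lemma csqrt_of_real_mult:
  assumes "a \<ge> 0"
  shows "csqrt (complex_of_real a * z) = complex_of_real (sqrt a) * csqrt z"
proof (cases "a = 0")
  case False
  with assms have "a > 0" by simp
  show ?thesis
  proof (rule csqrt_unique)
    show "(complex_of_real (sqrt a) * csqrt z)\<^sup>2 = complex_of_real a * z"
      using \<open>a > 0\<close> by (simp add: power_mult_distrib flip: of_real_power)
    show "0 < Re (complex_of_real (sqrt a) * csqrt z) \<or>
      Re (complex_of_real (sqrt a) * csqrt z) = 0 \<and> 0 \<le> Im (complex_of_real (sqrt a) * csqrt z)"
      using csqrt_principal[of z] \<open>a > 0\<close> by auto
  qed
qed simp

lemma of_real_mult_in_closed_segment:
  "t \<in> {0..1} \<Longrightarrow> complex_of_real t * q \<in> closed_segment 0 q"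
  by (auto simp: closed_segment_def scaleR_conv_of_real)

lemma continuous_on_along_segment:
  assumes "continuous_on S g" "closed_segment 0 q \<subseteq> S"
  shows "continuous_on {0..1} (\<lambda>t. g (complex_of_real t * q))"
  by (intro continuous_on_compose2[OF assms(1)] continuous_intros)
     (use assms(2) of_real_mult_in_closed_segment in auto)

lemma has_vector_derivative_along_ray:
  assumes "f holomorphic_on S" "open S" "complex_of_real t * q \<in> S"
  shows "((\<lambda>t. f (complex_of_real t * q)) has_vector_derivative q * deriv f (complex_of_real t * q))
           (at t within T)"
proof -
  have "((\<lambda>t. complex_of_real t * q) has_vector_derivative q) (at t within T)"
    using has_vector_derivative_mult_left[OF has_vector_derivative_of_real[OF DERIV_ident], of q]
    by simp
  from field_vector_diff_chain_within[OF this holomorphic_derivI[OF assms]]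
  show ?thesis by (simp add: o_def)
qed

lemma holomorphic_on_parametric_integral:
  fixes F :: "complex \<Rightarrow> real \<Rightarrow> complex"
  assumes "open U"
    and deriv: "\<And>z t. z \<in> U \<Longrightarrow> t \<in> {a..b} \<Longrightarrow> ((\<lambda>z. F z t) has_field_derivative F' z t) (at z)"
    and cont: "\<And>z. z \<in> U \<Longrightarrow> continuous_on {a..b} (F z)"
    and cont': "continuous_on (U \<times> {a..b}) (\<lambda>(z, t). F' z t)"
  shows "(\<lambda>z. integral {a..b} (F z)) holomorphic_on U"
  unfolding holomorphic_on_def
proof
  fix z assume "z \<in> U"
  then obtain e where "e > 0" and e: "ball z e \<subseteq> U"
    using \<open>open U\<close> open_contains_ball by blast
  have "(\<lambda>z. integral (cbox a b) (F z)) holomorphic_on ball z e"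
  proof (rule leibniz_rule_holomorphic)
    fix x t assume "x \<in> ball z e" "t \<in> cbox a b"
    then have "x \<in> U" "t \<in> {a..b}" using e by auto
    from deriv[OF this] show "((\<lambda>x. F x t) has_field_derivative F' x t) (at x within ball z e)"
      by (rule has_field_derivative_at_within)
  next
    fix x assume "x \<in> ball z e"
    then have "x \<in> U" using e by auto
    then show "F x integrable_on cbox a b"
      using cont integrable_continuous_interval by auto
  next
    show "continuous_on (ball z e \<times> cbox a b) (\<lambda>(x, t). F' x t)"
      by (rule continuous_on_subset[OF cont']) (use e in auto)
  qed simp
  then have "(\<lambda>z. integral {a..b} (F z)) field_differentiable at z"
    using \<open>e > 0\<close> holomorphic_on_imp_differentiable_at[of _ "ball z e" z] by auto
  then show "(\<lambda>z. integral {a..b} (F z)) field_differentiable at z within U"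
    by (rule field_differentiable_at_within)
qed

definition abel_tail :: "(complex \<Rightarrow> complex) \<Rightarrow> complex \<Rightarrow> complex" where
  "abel_tail f q = integral {0..1} (\<lambda>t. complex_of_real (sqrt (1 - t)) * deriv f (complex_of_real t * q))"

definition abel_factor :: "(complex \<Rightarrow> complex) \<Rightarrow> complex \<Rightarrow> complex" where
  "abel_factor f q = 2 * f 0 + 2 * q * abel_tail f q"

(* sqrt p * d/dp (sqrt p * G p) = G p / 2 + p * G' p for G = abel_factor f *)
definition abel_rep :: "(complex \<Rightarrow> complex) \<Rightarrow> complex \<Rightarrow> complex" where
  "abel_rep f p = abel_factor f p / 2 + p * deriv (abel_factor f) p"

lemma has_integral_abel_tail:
  assumes "f holomorphic_on S" "open S" "closed_segment 0 q \<subseteq> S"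
  shows "((\<lambda>t. complex_of_real (sqrt (1 - t)) * deriv f (complex_of_real t * q)) has_integral abel_tail f q)
           {0..1}"
proof -
  have "continuous_on S (deriv f)"
    using holomorphic_deriv[OF assms(1,2)] holomorphic_on_imp_continuous_on by blast
  then have "continuous_on {0..1} (\<lambda>t. complex_of_real (sqrt (1 - t)) * deriv f (complex_of_real t * q))"
    by (intro continuous_intros continuous_on_along_segment[OF _ assms(3)])
  then show ?thesis
    unfolding abel_tail_def using integrable_continuous_interval integrable_integral by blast
qed

lemma has_integral_abel_by_parts:
  assumes f: "f holomorphic_on S" and S: "open S" and seg: "closed_segment 0 q \<subseteq> S"
  shows "((\<lambda>t. f (complex_of_real t * q) / complex_of_real (sqrt (1 - t))) has_integral abel_factor f q)
           {0..1}"
proof -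
  define G where "G t = - 2 * complex_of_real (sqrt (1 - t)) * f (complex_of_real t * q)" for t
  define g where "g t = f (complex_of_real t * q) / complex_of_real (sqrt (1 - t))
        - 2 * q * (complex_of_real (sqrt (1 - t)) * deriv f (complex_of_real t * q))" for t
  have "(g has_integral (G 1 - G 0)) {0..1}"
  proof (rule fundamental_theorem_of_calculus_interior)
    show "continuous_on {0..1} G"
      unfolding G_def
      by (intro continuous_intros continuous_on_along_segment[OF _ seg]
          holomorphic_on_imp_continuous_on[OF f])
    fix t :: real assume t: "t \<in> {0<..<1}"
    have "((\<lambda>t. complex_of_real (sqrt (1 - t))) has_vector_derivative
              complex_of_real (- 1 / (2 * sqrt (1 - t)))) (at t)"
      using t by (intro has_vector_derivative_of_real) (auto intro!: derivative_eq_intros simp: divide_simps)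
    from has_vector_derivative_mult[OF has_vector_derivative_mult_right[OF this, of "-2"]
        has_vector_derivative_along_ray[OF f S subsetD[OF seg of_real_mult_in_closed_segment]]]
    have "(G has_vector_derivative
        - 2 * complex_of_real (sqrt (1 - t)) * (q * deriv f (complex_of_real t * q))
        + (- 2 * complex_of_real (- 1 / (2 * sqrt (1 - t)))) * f (complex_of_real t * q)) (at t)"
      using t unfolding G_def by (simp add: algebra_simps)
    moreover have "(- 2 * complex_of_real (- 1 / (2 * sqrt (1 - t)))) * f (complex_of_real t * q) =
        f (complex_of_real t * q) / complex_of_real (sqrt (1 - t))"
      by (simp add: divide_simps)
    ultimately show "(G has_vector_derivative g t) (at t)"
      unfolding g_def by (simp add: algebra_simps)
  qed simp
  moreover have "G 1 - G 0 = 2 * f 0"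
    unfolding G_def by simp
  ultimately have "((\<lambda>t. g t + 2 * q * (complex_of_real (sqrt (1 - t)) * deriv f (complex_of_real t * q)))
      has_integral 2 * f 0 + 2 * q * abel_tail f q) {0..1}"
    by (intro has_integral_add has_integral_mult_right has_integral_abel_tail[OF f S seg]) simp
  then show ?thesis
    unfolding g_def abel_factor_def by simp
qed

lemma Iop_eq_csqrt_mult_abel_factor:
  assumes "f holomorphic_on S" "open S" "closed_segment 0 q \<subseteq> S"
  shows "Iop f q = csqrt q * abel_factor f q"
proof -
  have integrand_eq: "(\<lambda>s. f s / csqrt (q - s)) (linepath 0 q t) * (q - 0) =
      csqrt q * (f (complex_of_real t * q) / complex_of_real (sqrt (1 - t)))" if "t \<in> {0..1}" for t
  proof -
    have "q - complex_of_real t * q = complex_of_real (1 - t) * q"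
      by (simp add: algebra_simps)
    then have sqrt_eq: "csqrt (q - complex_of_real t * q) = complex_of_real (sqrt (1 - t)) * csqrt q"
      using that csqrt_of_real_mult[of "1 - t" q] by simp
    have q_eq: "q = csqrt q * csqrt q"
      using power2_csqrt[of q] by (simp add: power2_eq_square)
    have line: "linepath 0 q t = complex_of_real t * q"
      by (simp add: linepath_def scaleR_conv_of_real)
    show ?thesis
      unfolding line sqrt_eq by (subst (3) q_eq) (simp add: field_simps)
  qed
  have "((\<lambda>s. f s / csqrt (q - s)) has_contour_integral csqrt q * abel_factor f q) (linepath 0 q)"
    unfolding has_contour_integral_linepath
    by (rule has_integral_eq[OF _ has_integral_mult_right[OF has_integral_abel_by_parts[OF assms]]])
       (use integrand_eq in simp)
  then show ?thesis
    unfolding Iop_def by (rule contour_integral_unique)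
qed

lemma abel_tail_holomorphic:
  assumes f: "f holomorphic_on D" and D: "open D" and star: "\<And>z. z \<in> D \<Longrightarrow> closed_segment 0 z \<subseteq> D"
  shows "abel_tail f holomorphic_on D"
proof -
  have ray: "complex_of_real t * z \<in> D" if "z \<in> D" "t \<in> {0..1}" for z t
    using star[OF that(1)] of_real_mult_in_closed_segment[OF that(2)] by blast
  have f': "deriv f holomorphic_on D" and f'': "deriv (deriv f) holomorphic_on D"
    using holomorphic_deriv[OF f D] holomorphic_deriv[OF holomorphic_deriv[OF f D] D] by auto
  have "(\<lambda>z. integral {0..1} (\<lambda>t. complex_of_real (sqrt (1 - t)) * deriv f (complex_of_real t * z)))
      holomorphic_on D"
  proof (rule holomorphic_on_parametric_integral[OF D])
    fix z t assume "z \<in> D" "t \<in> {0..1::real}"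
    from DERIV_chain2[OF holomorphic_derivI[OF f' D ray[OF this]] DERIV_cmult_Id]
    show "((\<lambda>z. complex_of_real (sqrt (1 - t)) * deriv f (complex_of_real t * z)) has_field_derivative
        complex_of_real (sqrt (1 - t)) * (deriv (deriv f) (complex_of_real t * z) * complex_of_real t)) (at z)"
      by (intro DERIV_cmult) (simp add: mult.commute)
  next
    fix z assume "z \<in> D"
    show "continuous_on {0..1} (\<lambda>t. complex_of_real (sqrt (1 - t)) * deriv f (complex_of_real t * z))"
      by (intro continuous_intros continuous_on_along_segment[OF _ star[OF \<open>z \<in> D\<close>]]
          holomorphic_on_imp_continuous_on[OF f'])
  next
    have "continuous_on (D \<times> {0..1}) (\<lambda>zt. deriv (deriv f) (complex_of_real (snd zt) * fst zt))"
      by (intro continuous_on_compose2[OF holomorphic_on_imp_continuous_on[OF f'']] continuous_intros)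
         (use ray in auto)
    then show "continuous_on (D \<times> {0..1}) (\<lambda>(z, t).
        complex_of_real (sqrt (1 - t)) * (deriv (deriv f) (complex_of_real t * z) * complex_of_real t))"
      by (auto simp: case_prod_unfold intro!: continuous_intros)
  qed
  then show ?thesis
    unfolding abel_tail_def[abs_def] .
qed

lemma abel_factor_holomorphic:
  assumes "f holomorphic_on D" "open D" "\<And>z. z \<in> D \<Longrightarrow> closed_segment 0 z \<subseteq> D"
  shows "abel_factor f holomorphic_on D"
  unfolding abel_factor_def[abs_def] using abel_tail_holomorphic[OF assms]
  by (intro holomorphic_intros)

lemma abel_rep_holomorphic:
  assumes "f holomorphic_on D" "open D" "\<And>z. z \<in> D \<Longrightarrow> closed_segment 0 z \<subseteq> D"
  shows "abel_rep f holomorphic_on D"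
  unfolding abel_rep_def[abs_def]
  using abel_factor_holomorphic[OF assms] holomorphic_deriv[OF abel_factor_holomorphic[OF assms] assms(2)]
  by (intro holomorphic_intros) (auto simp: assms(2))

lemma Aop0_eq_of_Iop_eq:
  assumes G: "G holomorphic_on U" and U: "open U" "p \<in> U" and "p \<noteq> 0"
    and Iop_eq: "\<And>q. q \<in> U \<Longrightarrow> Iop f q = csqrt q * G q"
  shows "Aop0 f p = G p / 2 + p * deriv G p"
proof -
  define V where "V = {0<..} \<inter> (\<lambda>r::real. complex_of_real r * p) -` U"
  have "open V"
    unfolding V_def
    by (intro open_Int open_greaterThan continuous_open_vimage U) (auto intro!: continuous_intros)
  have "((\<lambda>r. complex_of_real (sqrt r)) has_vector_derivative complex_of_real (1/2)) (at 1)"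
    using DERIV_real_sqrt[of 1] by (intro has_vector_derivative_of_real) simp
  from has_vector_derivative_mult[OF has_vector_derivative_mult_left[OF this, of "csqrt p"]
      has_vector_derivative_along_ray[OF G U(1), of 1 p]]
  have "((\<lambda>r. complex_of_real (sqrt r) * csqrt p * G (complex_of_real r * p)) has_vector_derivative
      csqrt p * (p * deriv G p) + csqrt p * (G p / 2)) (at 1)"
    using U by (simp add: algebra_simps)
  then have "((\<lambda>r. Iop f (complex_of_real r * p)) has_vector_derivative
      csqrt p * (p * deriv G p) + csqrt p * (G p / 2)) (at 1)"
  proof (rule has_vector_derivative_transform_within_open[OF _ \<open>open V\<close>])
    show "1 \<in> V" using U by (simp add: V_def)
    fix r assume "r \<in> V"
    then have "r > 0" "complex_of_real r * p \<in> U" by (auto simp: V_def)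
    then show "complex_of_real (sqrt r) * csqrt p * G (complex_of_real r * p) = Iop f (complex_of_real r * p)"
      using Iop_eq csqrt_of_real_mult[of r p] by simp
  qed
  then have "Aop0 f p = csqrt p * csqrt p * (p * deriv G p + G p / 2) / p"
    unfolding Aop0_def by (simp add: vector_derivative_at algebra_simps)
  also have "\<dots> = G p / 2 + p * deriv G p"
    using \<open>p \<noteq> 0\<close> power2_csqrt[of p] by (simp add: power2_eq_square field_simps)
  finally show ?thesis .
qed

lemma Aop_eq_abel_rep:
  assumes f: "f holomorphic_on D" and D: "open D" and star: "\<And>z. z \<in> D \<Longrightarrow> closed_segment 0 z \<subseteq> D"
    and "0 \<in> D" "p \<in> D"
  shows "Aop f p = abel_rep f p"
proof -
  have Aop0_eq: "Aop0 f q = abel_rep f q" if "q \<in> D" "q \<noteq> 0" for q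
    unfolding abel_rep_def
    by (rule Aop0_eq_of_Iop_eq[OF _ D that])
       (use abel_factor_holomorphic[OF f D star] Iop_eq_csqrt_mult_abel_factor[OF f D star] in auto)
  show ?thesis
  proof (cases "p = 0")
    case True
    have "isCont (abel_rep f) 0"
      using abel_rep_holomorphic[OF f D star] D \<open>0 \<in> D\<close>
      by (meson continuous_on_eq_continuous_at holomorphic_on_imp_continuous_on)
    have "eventually (\<lambda>q. q \<in> D \<and> q \<noteq> 0) (at 0)"
      using D \<open>0 \<in> D\<close> by (simp add: eventually_at_filter eventually_nhds) blast
    then have "eventually (\<lambda>q. abel_rep f q = Aop0 f q) (at 0)"
      by eventually_elim (use Aop0_eq in auto)
    with \<open>isCont (abel_rep f) 0\<close> have "(Aop0 f \<longlongrightarrow> abel_rep f 0) (at 0)"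
      by (auto simp: isCont_def intro: Lim_transform_eventually)
    then show ?thesis
      using True by (simp add: Aop_def tendsto_Lim)
  qed (use Aop0_eq \<open>p \<in> D\<close> in \<open>simp add: Aop_def\<close>)
qed

lemma Aop_holomorphic_on:
  assumes "f holomorphic_on D" "open D" "\<And>z. z \<in> D \<Longrightarrow> closed_segment 0 z \<subseteq> D" "0 \<in> D"
  shows "Aop f holomorphic_on D"
  by (rule holomorphic_transform[OF abel_rep_holomorphic[OF assms(1-3)]])
     (use Aop_eq_abel_rep[OF assms] in auto)

lemma Aop_analytic_on:
  assumes "f analytic_on D" "open D" "\<And>z. z \<in> D \<Longrightarrow> closed_segment 0 z \<subseteq> D" "0 \<in> D"
  shows "Aop f analytic_on D"
  using Aop_holomorphic_on[of f D] assms analytic_on_open by blast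

section \<open>Power series\<close>

lemma sums_integral_Weierstrass:
  fixes g :: "nat \<Rightarrow> real \<Rightarrow> complex"
  assumes cont: "\<And>n. continuous_on {a..b} (g n)"
    and bound: "\<And>n t. t \<in> {a..b} \<Longrightarrow> norm (g n t) \<le> M n" and "summable M"
  shows "(\<lambda>n. integral {a..b} (g n)) sums integral {a..b} (\<lambda>t. \<Sum>n. g n t)"
proof -
  have lim: "uniform_limit {a..b} (\<lambda>n t. \<Sum>i<n. g i t) (\<lambda>t. \<Sum>i. g i t) sequentially"
    by (rule Weierstrass_m_test[OF bound \<open>summable M\<close>])
  have "continuous_on {a..b} (\<lambda>t. \<Sum>i<n. g i t)" for n
    by (intro continuous_on_sum cont)
  then obtain I J where I: "\<And>n. ((\<lambda>t. \<Sum>i<n. g i t) has_integral I n) {a..b}"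
    and J: "((\<lambda>t. \<Sum>i. g i t) has_integral J) {a..b}" and "I \<longlonglongrightarrow> J"
    using uniform_limit_integral[OF lim] by auto
  have "((\<lambda>t. \<Sum>i<n. g i t) has_integral (\<Sum>i<n. integral {a..b} (g i))) {a..b}" for n
    by (intro has_integral_sum) (auto intro: integrable_integral integrable_continuous_interval cont)
  then have "I = (\<lambda>n. \<Sum>i<n. integral {a..b} (g i))"
    using I has_integral_unique by blast
  with \<open>I \<longlonglongrightarrow> J\<close> integral_unique[OF J] show ?thesis
    unfolding sums_def by simp
qed

lemma summable_norm_powser_unit_ball:
  fixes a :: "nat \<Rightarrow> complex"
  assumes "\<And>z. norm z < 1 \<Longrightarrow> summable (\<lambda>k. a k * z ^ k)" and "norm q < 1"
  shows "summable (\<lambda>k. norm (a k * q ^ k))"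
proof -
  define r where "r = (1 + norm q) / 2"
  have "r > 0"
    by (simp add: r_def add_pos_nonneg)
  then have "norm (complex_of_real r) = r"
    by simp
  then have "norm q < norm (complex_of_real r)" "norm (complex_of_real r) < 1"
    using \<open>norm q < 1\<close> by (auto simp: r_def)
  then show ?thesis
    by (intro powser_insidea[OF assms(1)])
qed

lemma powser_unit_ball_deriv:
  fixes a :: "nat \<Rightarrow> complex"
  assumes F: "\<And>z. norm z < 1 \<Longrightarrow> (\<lambda>k. a k * z ^ k) sums F z" and "norm z < 1"
  shows "(F has_field_derivative (\<Sum>k. diffs a k * z ^ k)) (at z)"
    and "(\<lambda>k. diffs a k * z ^ k) sums (\<Sum>k. diffs a k * z ^ k)"
proof -
  have summable: "\<And>z. norm z < 1 \<Longrightarrow> summable (\<lambda>k. a k * z ^ k)"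
    using F sums_summable by blast
  have "((\<lambda>z. \<Sum>k. a k * z ^ k) has_field_derivative (\<Sum>k. diffs a k * z ^ k)) (at z)"
    using termdiffs_strong'[of 1 a z] summable \<open>norm z < 1\<close> by blast
  then show "(F has_field_derivative (\<Sum>k. diffs a k * z ^ k)) (at z)"
    by (rule has_field_derivative_transform_within_open[of _ _ _ "ball 0 1"])
       (use \<open>norm z < 1\<close> F in \<open>auto simp: sums_iff\<close>)
  show "(\<lambda>k. diffs a k * z ^ k) sums (\<Sum>k. diffs a k * z ^ k)"
    using termdiff_converges[OF \<open>norm z < 1\<close> summable] summable_sums by blast
qed

lemma has_integral_power_mult_sqrt:
  "((\<lambda>t. t ^ n * sqrt (1 - t)) has_integral Beta (real n + 1) (3/2)) {0..1}"
proof (rule has_integral_spike_finite[OF _ _ has_integral_Beta_real[of "real n + 1" "3/2"]])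
  show "t ^ n * sqrt (1 - t) = t powr (real n + 1 - 1) * (1 - t) powr (3/2 - 1)"
    if "t \<in> {0..1} - {0}" for t
    using that powr_realpow[of t n] powr_half_sqrt[of "1 - t"] by simp
qed auto

definition abel_coeff :: "nat \<Rightarrow> real" where
  "abel_coeff k = sqrt pi * Gamma (real k + 1) / Gamma (real k + 1/2)"

lemma Gamma_real_plus1:
  "x > 0 \<Longrightarrow> Gamma (x + 1) = x * Gamma (x :: real)"
  by (rule Gamma_plus1) (auto elim!: nonpos_Ints_cases)

lemma abel_coeff_Suc_Beta:
  "abel_coeff (Suc n) = (2 * real n + 3) * (real n + 1) * Beta (real n + 1) (3/2)"
proof -
  define A B where "A = Gamma (real n + 1)" and "B = Gamma (real n + 3/2)"
  have "B > 0"
    by (simp add: B_def)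
  have "Gamma (real (Suc n) + 1) = (real n + 1) * A"
    using Gamma_real_plus1[of "real n + 1"] by (simp add: A_def add.commute)
  moreover have "Gamma (real (Suc n) + 1/2) = B"
    by (simp add: B_def add.commute)
  ultimately have coeff: "abel_coeff (Suc n) = sqrt pi * ((real n + 1) * A) / B"
    unfolding abel_coeff_def by simp
  have "Gamma (real n + 1 + 3/2) = (real n + 3/2) * B"
    using Gamma_real_plus1[of "real n + 3/2"] by (simp add: B_def add.assoc)
  moreover have "Gamma (3/2 :: real) = sqrt pi / 2"
    using Gamma_real_plus1[of "1/2"] by (simp add: Gamma_one_half_real)
  ultimately have Beta_eq: "Beta (real n + 1) (3/2) = A * (sqrt pi / 2) / ((real n + 3/2) * B)"
    unfolding Beta_def A_def[symmetric] by (simp only:)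
  have "B \<noteq> 0" "B * (2 * real n + 3) \<noteq> 0"
    using \<open>B > 0\<close> by simp_all
  then have "sqrt pi * ((real n + 1) * A) / B =
      (2 * real n + 3) * (real n + 1) * (A * (sqrt pi / 2) / ((real n + 3/2) * B))"
    by (simp add: field_simps)
  then show ?thesis
    unfolding coeff Beta_eq .
qed

definition rsqrt_coeff :: "nat \<Rightarrow> real" where
  "rsqrt_coeff k = pochhammer (1/2) k / fact k"

lemma abel_coeff_mult_rsqrt_coeff: "abel_coeff k * rsqrt_coeff k = 1"
proof -
  define A B where "A = Gamma (real k + 1)" and "B = Gamma (real k + 1/2)"
  have "A > 0" "B > 0"
    by (simp_all add: A_def B_def)
  have "pochhammer (1/2) k = B / sqrt pi"
    unfolding B_def
    by (subst pochhammer_Gamma) (auto simp: Gamma_one_half_real add.commute elim!: nonpos_Ints_cases)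
  moreover have "fact k = A"
    using Gamma_fact[of k, where 'a=real] by (simp add: A_def add.commute)
  ultimately show ?thesis
    using \<open>A > 0\<close> \<open>B > 0\<close> unfolding abel_coeff_def rsqrt_coeff_def A_def[symmetric] B_def[symmetric]
    by simp
qed

lemma powr_minus_half:
  assumes "w \<noteq> 0"
  shows "w powr (-1/2) = 1 / csqrt w"
proof -
  have "w powr (-1/2) = exp ((-1/2) * Ln w)" using assms by (simp add: powr_def)
  also have "(-1/2) * Ln w = - (Ln w / 2)" by simp
  also have "exp (- (Ln w / 2)) = inverse (exp (Ln w / 2))" by (rule exp_minus)
  also have "\<dots> = 1 / csqrt w" using csqrt_exp_Ln[OF assms] by (simp add: inverse_eq_divide)
  finally show ?thesis .
qed

lemma csqrt_binomial_sums:
  assumes "norm w < 1"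
  shows "(\<lambda>k. complex_of_real (rsqrt_coeff k) * w ^ k) sums (1 / csqrt (1 - w))"
proof -
  have "((-1/2) gchoose k) * (- w) ^ k = complex_of_real (rsqrt_coeff k) * w ^ k" for k
  proof -
    have "((-1/2) gchoose k) * (- w) ^ k = (-1) ^ k * (-1) ^ k * (pochhammer (1/2) k / fact k) * w ^ k"
      unfolding gbinomial_pochhammer power_minus[of w] by (simp add: mult_ac)
    also have "\<dots> = complex_of_real (rsqrt_coeff k) * w ^ k"
      using pochhammer_of_real[of "1/2" k, where 'a=complex] by (simp add: rsqrt_coeff_def)
    finally show ?thesis .
  qed
  moreover have "1 - w \<noteq> 0"
    using assms by auto
  ultimately show ?thesis
    using gen_binomial_complex[of "- w" "-1/2"] assms powr_minus_half[of "1 - w"] by simp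
qed

definition abel_factor_coeff :: "(nat \<Rightarrow> complex) \<Rightarrow> nat \<Rightarrow> complex" where
  "abel_factor_coeff c k =
     (case k of 0 \<Rightarrow> 2 * c 0 | Suc n \<Rightarrow> 2 * diffs c n * complex_of_real (Beta (real n + 1) (3/2)))"

lemma abel_factor_coeff_rep:
  "abel_factor_coeff c k / 2 + of_nat k * abel_factor_coeff c k = complex_of_real (abel_coeff k) * c k"
proof (cases k)
  case 0
  then show ?thesis
    by (simp add: abel_factor_coeff_def abel_coeff_def Gamma_one_half_real)
next
  case (Suc n)
  then show ?thesis
    by (simp add: abel_factor_coeff_def diffs_def abel_coeff_Suc_Beta algebra_simps)
qed

context
  fixes f :: "complex \<Rightarrow> complex" and c :: "nat \<Rightarrow> complex"
  assumes f_powser: "\<And>z. norm z < 1 \<Longrightarrow> (\<lambda>k. c k * z ^ k) sums f z"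
begin

lemma abel_tail_powser:
  assumes "norm q < 1"
  shows "(\<lambda>k. diffs c k * q ^ k * complex_of_real (Beta (real k + 1) (3/2))) sums abel_tail f q"
proof -
  have diffs_summable: "summable (\<lambda>k. diffs c k * z ^ k)" if "norm z < 1" for z
    using powser_unit_ball_deriv(2)[OF f_powser that] sums_summable by blast
  define g where "g k t = complex_of_real (sqrt (1 - t)) * (diffs c k * (complex_of_real t * q) ^ k)"
    for k t
  have "(\<lambda>k. integral {0..1} (g k)) sums integral {0..1} (\<lambda>t. \<Sum>k. g k t)"
  proof (rule sums_integral_Weierstrass)
    show "continuous_on {0..1} (g k)" for k
      unfolding g_def by (intro continuous_intros)
    show "summable (\<lambda>k. norm (diffs c k * q ^ k))"
      by (rule summable_norm_powser_unit_ball[OF diffs_summable \<open>norm q < 1\<close>])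
    fix k t assume t: "t \<in> {0..1::real}"
    have "norm (g k t) = sqrt (1 - t) * (t ^ k * norm (diffs c k * q ^ k))"
      using t by (simp add: g_def norm_mult norm_power power_mult_distrib)
    also have "\<dots> \<le> 1 * (1 * norm (diffs c k * q ^ k))"
      using t by (intro mult_mono power_le_one) auto
    finally show "norm (g k t) \<le> norm (diffs c k * q ^ k)"
      by simp
  qed
  moreover have "integral {0..1} (g k) = diffs c k * q ^ k * complex_of_real (Beta (real k + 1) (3/2))"
    for k
  proof -
    have "((\<lambda>t. (diffs c k * q ^ k) * complex_of_real (t ^ k * sqrt (1 - t))) has_integral
        (diffs c k * q ^ k) * complex_of_real (Beta (real k + 1) (3/2))) {0..1}"
      by (intro has_integral_mult_right has_integral_of_real has_integral_power_mult_sqrt)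
    moreover have "(\<lambda>t. (diffs c k * q ^ k) * complex_of_real (t ^ k * sqrt (1 - t))) = g k"
      by (auto simp: g_def fun_eq_iff power_mult_distrib)
    ultimately show ?thesis
      by (simp add: integral_unique)
  qed
  moreover have "integral {0..1} (\<lambda>t. \<Sum>k. g k t) = abel_tail f q"
    unfolding abel_tail_def
  proof (rule integral_cong)
    fix t assume t: "t \<in> {0..1::real}"
    then have tq: "norm (complex_of_real t * q) < 1"
      using \<open>norm q < 1\<close> by (auto simp: norm_mult intro: le_less_trans[OF mult_left_le_one_le])
    have "deriv f (complex_of_real t * q) = (\<Sum>k. diffs c k * (complex_of_real t * q) ^ k)"
      using powser_unit_ball_deriv(1)[OF f_powser tq] DERIV_imp_deriv by blast
    then show "(\<Sum>k. g k t) = complex_of_real (sqrt (1 - t)) * deriv f (complex_of_real t * q)"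
      unfolding g_def using suminf_mult[OF diffs_summable[OF tq]] by simp
  qed
  ultimately show ?thesis
    by simp
qed

lemma abel_factor_powser:
  assumes "norm q < 1"
  shows "(\<lambda>k. abel_factor_coeff c k * q ^ k) sums abel_factor f q"
proof -
  have "(\<lambda>k. abel_factor_coeff c (Suc k) * q ^ Suc k) =
      (\<lambda>k. 2 * q * (diffs c k * q ^ k * complex_of_real (Beta (real k + 1) (3/2))))"
    by (auto simp: abel_factor_coeff_def fun_eq_iff)
  with sums_mult[OF abel_tail_powser[OF assms], of "2 * q"]
  have "(\<lambda>k. abel_factor_coeff c (Suc k) * q ^ Suc k) sums (2 * q * abel_tail f q)"
    by simp
  from sums_Suc[OF this]
  have "(\<lambda>k. abel_factor_coeff c k * q ^ k) sums (2 * q * abel_tail f q + abel_factor_coeff c 0 * q ^ 0)" .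
  moreover have "abel_factor_coeff c 0 * q ^ 0 = 2 * f 0"
    using f_powser[of 0] powser_sums_zero[of c] sums_unique2 by (auto simp: abel_factor_coeff_def)
  ultimately show ?thesis
    unfolding abel_factor_def by (simp add: add.commute)
qed

lemma abel_rep_powser:
  assumes "norm p < 1"
  shows "(\<lambda>k. complex_of_real (abel_coeff k) * c k * p ^ k) sums abel_rep f p"
proof -
  note factor = abel_factor_powser
  have "(\<lambda>k. p * (diffs (abel_factor_coeff c) k * p ^ k)) sums (p * deriv (abel_factor f) p)"
    using sums_mult[OF powser_unit_ball_deriv(2)[OF factor assms]]
      DERIV_imp_deriv[OF powser_unit_ball_deriv(1)[OF factor assms]] by simp
  then have "(\<lambda>k. of_nat (Suc k) * abel_factor_coeff c (Suc k) * p ^ Suc k) sums (p * deriv (abel_factor f) p)"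
    by (simp add: diffs_def mult_ac)
  from sums_Suc[OF this]
  have "(\<lambda>k. of_nat k * abel_factor_coeff c k * p ^ k) sums (p * deriv (abel_factor f) p)"
    by simp
  from sums_add[OF sums_divide[OF factor[OF assms], of 2] this]
  have "(\<lambda>k. (abel_factor_coeff c k / 2 + of_nat k * abel_factor_coeff c k) * p ^ k) sums abel_rep f p"
    unfolding abel_rep_def by (simp add: algebra_simps)
  then show ?thesis
    unfolding abel_factor_coeff_rep .
qed

theorem Aop_powser:
  assumes "norm p < 1"
  shows "(\<lambda>k. complex_of_real (abel_coeff k) * c k * p ^ k) sums Aop f p"
proof -
  have holo: "f holomorphic_on ball 0 1"
    unfolding holomorphic_on_def field_differentiable_def
    using powser_unit_ball_deriv(1)[OF f_powser] has_field_derivative_at_within by fastforce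
  have star: "closed_segment 0 z \<subseteq> ball 0 1" if "z \<in> ball 0 1" for z :: complex
    by (rule closed_segment_subset) (use that in auto)
  have "Aop f p = abel_rep f p"
    using Aop_eq_abel_rep[OF holo open_ball star] assms by simp
  then show ?thesis
    using abel_rep_powser[OF assms] by simp
qed

end

lemma Aop_powser_rsqrt_coeff:
  assumes "\<And>z. norm z < 1 \<Longrightarrow> (\<lambda>k. complex_of_real (rsqrt_coeff k) * a k * z ^ k) sums f z"
    and "norm p < 1"
  shows "(\<lambda>k. a k * p ^ k) sums Aop f p"
  using Aop_powser[of "\<lambda>k. complex_of_real (rsqrt_coeff k) * a k" f p] assms
  unfolding mult.assoc[symmetric] of_real_mult[symmetric] abel_coeff_mult_rsqrt_coeff by simp

section \<open>The kernel (1 - p x) powr (-1/2) on the slit plane\<close>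

(* The region p = 0 or 1/p \<notin> [-1, 1] of (iii) and (iv): the plane without (-\<infinity>, -1] and [1, \<infinity>). *)
definition slit_plane :: "complex set" where
  "slit_plane = {q. Im q \<noteq> 0 \<or> \<bar>Re q\<bar> < 1}"

lemma open_slit_plane: "open slit_plane"
proof -
  have "slit_plane = {q. Im q \<noteq> 0} \<union> {q. \<bar>Re q\<bar> < 1}"
    by (auto simp: slit_plane_def)
  also have "open \<dots>"
    by (intro open_Un open_Collect_neq open_Collect_less continuous_intros)
  finally show ?thesis .
qed

lemma ball_subset_slit_plane: "ball 0 1 \<subseteq> slit_plane"
proof
  fix q :: complex assume "q \<in> ball 0 1"
  then show "q \<in> slit_plane"
    using abs_Re_le_cmod[of q] by (simp add: slit_plane_def)
qed

lemma closed_segment_subset_slit_plane: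
  assumes "q \<in> slit_plane"
  shows "closed_segment 0 q \<subseteq> slit_plane"
proof
  fix w assume "w \<in> closed_segment 0 q"
  then obtain t where t: "0 \<le> t" "t \<le> 1" "w = complex_of_real t * q"
    by (auto simp: closed_segment_def scaleR_conv_of_real)
  have "\<bar>t * Re q\<bar> \<le> \<bar>Re q\<bar>"
    using t by (simp add: abs_mult mult_left_le_one_le)
  then show "w \<in> slit_plane"
    using assms t by (cases "t = 0") (auto simp: slit_plane_def)
qed

lemma mem_slit_plane:
  assumes "p = 0 \<or> inverse p \<notin> complex_of_real ` {-1..1}"
  shows "p \<in> slit_plane"
proof (rule ccontr)
  assume "p \<notin> slit_plane"
  then have "Im p = 0" "1 \<le> \<bar>Re p\<bar>"
    by (auto simp: slit_plane_def)
  then have "\<bar>inverse (Re p)\<bar> \<le> 1"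
    by (simp add: abs_inverse inverse_le_1_iff)
  then have "inverse (Re p) \<in> {-1..1}"
    by (simp only: abs_le_iff) auto
  moreover have "inverse p = complex_of_real (inverse (Re p))" "p \<noteq> 0"
    using \<open>Im p = 0\<close> \<open>1 \<le> \<bar>Re p\<bar>\<close> by (auto simp: complex_eq_iff)
  ultimately show False
    using assms by blast
qed

lemma one_minus_mult_notin_nonpos_Reals:
  assumes "q \<in> slit_plane" "x \<in> {-1..1}"
  shows "1 - q * complex_of_real x \<notin> \<real>\<^sub>\<le>\<^sub>0"
proof
  assume "1 - q * complex_of_real x \<in> \<real>\<^sub>\<le>\<^sub>0"
  then have "1 \<le> Re q * x" "Im q * x = 0"
    by (auto simp: complex_nonpos_Reals_iff)
  moreover have "\<bar>Re q * x\<bar> \<le> \<bar>Re q\<bar>"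
    using assms(2) by (simp add: abs_mult mult_left_le abs_le_iff)
  ultimately show False
    using assms(1) by (auto simp: slit_plane_def)
qed

lemma one_minus_mult_nonzero:
  "q \<in> slit_plane \<Longrightarrow> x \<in> {-1..1} \<Longrightarrow> 1 - q * complex_of_real x \<noteq> 0"
  using one_minus_mult_notin_nonpos_Reals nonpos_Reals_zero_I by metis

lemma norm_mult_of_real_less_one:
  "norm q < 1 \<Longrightarrow> \<bar>x\<bar> \<le> 1 \<Longrightarrow> norm (q * complex_of_real x) < 1"
  by (simp add: norm_mult) (metis abs_ge_zero le_less_trans mult_left_le norm_ge_zero)

lemma Aop_eq_on_star_domain:
  assumes f: "f holomorphic_on D" and g: "g holomorphic_on D" and "open D"
    and star: "\<And>z. z \<in> D \<Longrightarrow> closed_segment 0 z \<subseteq> D" and ball: "ball 0 1 \<subseteq> D"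
    and eq: "\<And>p. norm p < 1 \<Longrightarrow> Aop f p = g p" and "p \<in> D"
  shows "Aop f p = g p"
proof -
  have "0 \<in> D"
    using ball by auto
  show ?thesis
  proof (rule analytic_continuation_open[of "ball 0 1" D "Aop f" g])
    show "connected D"
      using star \<open>0 \<in> D\<close> by (intro starlike_imp_connected) (auto simp: starlike_def)
    show "Aop f holomorphic_on D"
      using Aop_holomorphic_on[OF f \<open>open D\<close> star \<open>0 \<in> D\<close>] .
  qed (use assms in auto)
qed

theorem Aop_inverse_csqrt:
  assumes x: "x \<in> {-1..1}" and p: "p \<in> slit_plane"
  shows "Aop (\<lambda>q. 1 / csqrt (1 - q * complex_of_real x)) p = 1 / (1 - p * complex_of_real x)"
proof (rule Aop_eq_on_star_domain[OF _ _ open_slit_plane closed_segment_subset_slit_plane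
      ball_subset_slit_plane _ p])
  show "(\<lambda>q. 1 / csqrt (1 - q * complex_of_real x)) holomorphic_on slit_plane"
    using one_minus_mult_notin_nonpos_Reals[OF _ x] one_minus_mult_nonzero[OF _ x]
    by (intro holomorphic_intros holomorphic_on_csqrt') auto
  show "(\<lambda>p. 1 / (1 - p * complex_of_real x)) holomorphic_on slit_plane"
    using one_minus_mult_nonzero[OF _ x] by (intro holomorphic_intros) auto
next
  fix p :: complex assume "norm p < 1"
  have "\<bar>x\<bar> \<le> 1"
    using x by auto
  have "(\<lambda>k. complex_of_real (rsqrt_coeff k) * complex_of_real x ^ k * q ^ k) sums
      (1 / csqrt (1 - q * complex_of_real x))" if "norm q < 1" for q
    using csqrt_binomial_sums[OF norm_mult_of_real_less_one[OF that \<open>\<bar>x\<bar> \<le> 1\<close>]]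
    by (simp add: power_mult_distrib mult_ac)
  from Aop_powser_rsqrt_coeff[OF this \<open>norm p < 1\<close>]
  have "(\<lambda>k. (p * complex_of_real x) ^ k) sums Aop (\<lambda>q. 1 / csqrt (1 - q * complex_of_real x)) p"
    by (simp add: power_mult_distrib mult.commute)
  moreover have "(\<lambda>k. (p * complex_of_real x) ^ k) sums (1 / (1 - p * complex_of_real x))"
    using geometric_sums[OF norm_mult_of_real_less_one[OF \<open>norm p < 1\<close> \<open>\<bar>x\<bar> \<le> 1\<close>]] .
  ultimately show "Aop (\<lambda>q. 1 / csqrt (1 - q * complex_of_real x)) p = 1 / (1 - p * complex_of_real x)"
    using sums_unique2 by blast
qed

section \<open>Potentials of a density on [-1, 1]\<close>

definition moment :: "(real \<Rightarrow> real) \<Rightarrow> nat \<Rightarrow> complex" where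
  "moment \<mu> k = integral {-1..1} (\<lambda>x. complex_of_real (\<mu> x) * complex_of_real x ^ k)"

lemma integral_powser_sums:
  fixes \<mu> :: "real \<Rightarrow> real" and b :: "nat \<Rightarrow> complex"
  assumes \<mu>: "continuous_on {-1..1} \<mu>" and summable: "summable (\<lambda>k. norm (b k * p ^ k))"
    and h: "\<And>x. x \<in> {-1..1} \<Longrightarrow> (\<lambda>k. b k * (p * complex_of_real x) ^ k) sums h x"
  shows "(\<lambda>k. b k * moment \<mu> k * p ^ k) sums integral {-1..1} (\<lambda>x. complex_of_real (\<mu> x) * h x)"
proof -
  obtain B where B: "\<forall>x\<in>{-1..1}. \<bar>\<mu> x\<bar> \<le> B"
    using compact_imp_bounded[OF compact_continuous_image[OF \<mu> compact_Icc]]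
    unfolding bounded_iff by auto
  define g where "g k x = complex_of_real (\<mu> x) * (b k * (p * complex_of_real x) ^ k)" for k x
  have "(\<lambda>k. integral {-1..1} (g k)) sums integral {-1..1} (\<lambda>x. \<Sum>k. g k x)"
  proof (rule sums_integral_Weierstrass)
    show "continuous_on {-1..1} (g k)" for k
      unfolding g_def by (intro continuous_intros \<mu>)
    show "summable (\<lambda>k. B * norm (b k * p ^ k))"
      by (intro summable_mult summable)
    fix k x assume x: "x \<in> {-1..1::real}"
    have "norm (g k x) = \<bar>\<mu> x\<bar> * (\<bar>x\<bar> ^ k * norm (b k * p ^ k))"
      by (simp add: g_def norm_mult norm_power power_mult_distrib)
    also have "\<dots> \<le> B * (1 * norm (b k * p ^ k))"
      using x bspec[OF B x] by (intro mult_mono power_le_one) auto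
    finally show "norm (g k x) \<le> B * norm (b k * p ^ k)"
      by simp
  qed
  moreover have "integral {-1..1} (g k) = b k * moment \<mu> k * p ^ k" for k
  proof -
    have "g k = (\<lambda>x. (complex_of_real (\<mu> x) * complex_of_real x ^ k) * (b k * p ^ k))"
      by (auto simp: g_def fun_eq_iff power_mult_distrib mult_ac)
    then show ?thesis
      unfolding moment_def by (simp add: integral_mult_left mult_ac)
  qed
  moreover have "integral {-1..1} (\<lambda>x. \<Sum>k. g k x) = integral {-1..1} (\<lambda>x. complex_of_real (\<mu> x) * h x)"
    using h by (intro integral_cong) (simp add: g_def suminf_mult sums_iff)
  ultimately show ?thesis
    by simp
qed

lemma continuous_on_csqrt_slit_plane:
  "continuous_on (slit_plane \<times> {-1..1}) (\<lambda>(p, x). csqrt (1 - p * complex_of_real x))"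
proof -
  have "continuous_on (slit_plane \<times> {-1..1}) (\<lambda>px. csqrt (1 - fst px * complex_of_real (snd px)))"
    by (intro continuous_on_compose2[OF continuous_on_csqrt] continuous_intros)
       (auto dest: one_minus_mult_notin_nonpos_Reals)
  then show ?thesis
    by (simp add: case_prod_unfold)
qed

context
  fixes \<mu> :: "real \<Rightarrow> real"
  assumes \<mu>: "continuous_on {-1..1} \<mu>"
begin

lemma continuous_on_density_slit_plane:
  "continuous_on (slit_plane \<times> {-1..1}) (\<lambda>(p, x). complex_of_real (\<mu> x))"
proof -
  have "continuous_on (slit_plane \<times> {-1..1}) (\<lambda>px. complex_of_real (\<mu> (snd px)))"
    by (intro continuous_intros continuous_on_compose2[OF \<mu>]) (auto intro!: continuous_intros)
  then show ?thesis
    by (simp add: case_prod_unfold)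
qed

lemma csqrt_potential_holomorphic:
  "(\<lambda>p. integral {-1..1} (\<lambda>x. complex_of_real (\<mu> x) / csqrt (1 - p * complex_of_real x)))
     holomorphic_on slit_plane"
proof (rule holomorphic_on_parametric_integral[OF open_slit_plane])
  fix z x assume z: "z \<in> slit_plane" and x: "x \<in> {-1..1::real}"
  have "1 - z * complex_of_real x \<notin> \<real>\<^sub>\<le>\<^sub>0" "csqrt (1 - z * complex_of_real x) \<noteq> 0"
    using one_minus_mult_notin_nonpos_Reals[OF z x] one_minus_mult_nonzero[OF z x] by auto
  then show "((\<lambda>z. complex_of_real (\<mu> x) / csqrt (1 - z * complex_of_real x)) has_field_derivative
      complex_of_real (\<mu> x) * complex_of_real x / (2 * csqrt (1 - z * complex_of_real x) ^ 3)) (at z)"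
    by (auto intro!: derivative_eq_intros simp: power2_eq_square power3_eq_cube field_simps)
next
  fix z assume z: "z \<in> slit_plane"
  have "continuous_on {-1..1} (\<lambda>x. csqrt (1 - z * complex_of_real x))"
    by (intro continuous_on_compose2[OF continuous_on_csqrt] continuous_intros)
       (auto dest: one_minus_mult_notin_nonpos_Reals[OF z])
  then show "continuous_on {-1..1} (\<lambda>x. complex_of_real (\<mu> x) / csqrt (1 - z * complex_of_real x))"
    using one_minus_mult_nonzero[OF z] by (intro continuous_intros \<mu>) auto
next
  show "continuous_on (slit_plane \<times> {-1..1}) (\<lambda>(z, x).
      complex_of_real (\<mu> x) * complex_of_real x / (2 * csqrt (1 - z * complex_of_real x) ^ 3))"
    using continuous_on_csqrt_slit_plane continuous_on_density_slit_plane one_minus_mult_nonzero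
    by (auto simp: case_prod_unfold intro!: continuous_intros)
qed

lemma cauchy_potential_holomorphic:
  "(\<lambda>p. integral {-1..1} (\<lambda>x. complex_of_real (\<mu> x) / (1 - p * complex_of_real x)))
     holomorphic_on slit_plane"
proof (rule holomorphic_on_parametric_integral[OF open_slit_plane])
  fix z x assume z: "z \<in> slit_plane" and x: "x \<in> {-1..1::real}"
  from one_minus_mult_nonzero[OF z x] show "((\<lambda>z. complex_of_real (\<mu> x) / (1 - z * complex_of_real x)) has_field_derivative
      complex_of_real (\<mu> x) * complex_of_real x / (1 - z * complex_of_real x) ^ 2) (at z)"
    by (auto intro!: derivative_eq_intros simp: power2_eq_square field_simps)
next
  fix z assume z: "z \<in> slit_plane"
  show "continuous_on {-1..1} (\<lambda>x. complex_of_real (\<mu> x) / (1 - z * complex_of_real x))"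
    using one_minus_mult_nonzero[OF z] by (intro continuous_intros \<mu>) auto
next
  show "continuous_on (slit_plane \<times> {-1..1}) (\<lambda>(z, x).
      complex_of_real (\<mu> x) * complex_of_real x / (1 - z * complex_of_real x) ^ 2)"
    using continuous_on_density_slit_plane one_minus_mult_nonzero
    by (auto simp: case_prod_unfold intro!: continuous_intros)
qed

lemma csqrt_potential_powser:
  assumes "norm q < 1"
  shows "(\<lambda>k. complex_of_real (rsqrt_coeff k) * moment \<mu> k * q ^ k) sums
           integral {-1..1} (\<lambda>x. complex_of_real (\<mu> x) / csqrt (1 - q * complex_of_real x))"
proof -
  have "summable (\<lambda>k. norm (complex_of_real (rsqrt_coeff k) * q ^ k))"
    using csqrt_binomial_sums sums_summable by (intro summable_norm_powser_unit_ball assms) blast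
  moreover have "(\<lambda>k. complex_of_real (rsqrt_coeff k) * (q * complex_of_real x) ^ k) sums
      (1 / csqrt (1 - q * complex_of_real x))" if "x \<in> {-1..1}" for x
    using that by (intro csqrt_binomial_sums norm_mult_of_real_less_one assms) auto
  ultimately show ?thesis
    using integral_powser_sums[OF \<mu>] by (simp add: divide_inverse)
qed

lemma cauchy_potential_powser:
  assumes "norm p < 1"
  shows "(\<lambda>k. moment \<mu> k * p ^ k) sums
           integral {-1..1} (\<lambda>x. complex_of_real (\<mu> x) / (1 - p * complex_of_real x))"
proof -
  have "summable (\<lambda>k. norm (1 * p ^ k))"
    using assms by (simp add: norm_power summable_geometric)
  moreover have "(\<lambda>k. 1 * (p * complex_of_real x) ^ k) sums (1 / (1 - p * complex_of_real x))"
    if "x \<in> {-1..1}" for x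
  proof -
    have "\<bar>x\<bar> \<le> 1"
      using that by auto
    from geometric_sums[OF norm_mult_of_real_less_one[OF assms this]] show ?thesis
      by simp
  qed
  ultimately have "(\<lambda>k. 1 * moment \<mu> k * p ^ k) sums
      integral {-1..1} (\<lambda>x. complex_of_real (\<mu> x) * (1 / (1 - p * complex_of_real x)))"
    by (rule integral_powser_sums[OF \<mu>])
  then show ?thesis
    by simp
qed

theorem Aop_csqrt_potential:
  assumes "p \<in> slit_plane"
  shows "Aop (\<lambda>p. integral {-1..1} (\<lambda>x. complex_of_real (\<mu> x) / csqrt (1 - p * complex_of_real x))) p =
         integral {-1..1} (\<lambda>x. complex_of_real (\<mu> x) / (1 - p * complex_of_real x))"
proof (rule Aop_eq_on_star_domain[OF csqrt_potential_holomorphic cauchy_potential_holomorphic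
      open_slit_plane closed_segment_subset_slit_plane ball_subset_slit_plane _ assms])
  fix p :: complex assume "norm p < 1"
  from Aop_powser_rsqrt_coeff[OF csqrt_potential_powser this] cauchy_potential_powser[OF this]
  show "Aop (\<lambda>p. integral {-1..1} (\<lambda>x. complex_of_real (\<mu> x) / csqrt (1 - p * complex_of_real x))) p =
      integral {-1..1} (\<lambda>x. complex_of_real (\<mu> x) / (1 - p * complex_of_real x))"
    by (rule sums_unique2)
qed

end

section \<open>Boundary values of the potential\<close>

lemma holder_on_imp_continuous_on:
  assumes "holder_on S g" shows "continuous_on S g"
proof -
  obtain C \<alpha> where a: "0 < \<alpha>" "\<alpha> \<le> 1" and h: "\<forall>x\<in>S. \<forall>y\<in>S. \<bar>g x - g y\<bar> \<le> C * \<bar>x - y\<bar> powr \<alpha>"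
    using assms unfolding holder_on_def by blast
  show ?thesis unfolding continuous_on_iff
  proof (intro ballI allI impI)
    fix x e assume x: "x \<in> S" and e: "(0::real) < e"
    define C' where "C' = max C 1"
    have C': "C' > 0" "C \<le> C'" by (auto simp: C'_def)
    define d where "d = (e / C') powr (1/\<alpha>)"
    have d: "d > 0" using e C' by (simp add: d_def)
    show "\<exists>d>0. \<forall>x'\<in>S. dist x' x < d \<longrightarrow> dist (g x') (g x) < e"
    proof (intro exI[of _ d] conjI ballI impI d)
      fix y assume y: "y \<in> S" and dy: "dist y x < d"
      have "\<bar>g y - g x\<bar> \<le> C * \<bar>y - x\<bar> powr \<alpha>" using h x y by blast
      also have "\<dots> \<le> C' * \<bar>y - x\<bar> powr \<alpha>" using C' by (intro mult_right_mono) auto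
      also have "\<dots> < C' * d powr \<alpha>"
        using dy C' a by (intro mult_strict_left_mono powr_less_mono2) (auto simp: dist_real_def)
      also have "d powr \<alpha> = e / C'"
        using e C' a by (simp add: d_def powr_powr)
      also have "C' * (e / C') = e" using C' by simp
      finally show "dist (g y) (g x) < e" by (simp add: dist_real_def)
    qed
  qed
qed

lemma abs_powr_integrable_on:
  assumes p: "p > -1" and c: "c \<ge> 0"
  shows "(\<lambda>y::real. \<bar>y\<bar> powr p) integrable_on {-c..c}"
proof -
  have h: "((\<lambda>x. x powr p) has_integral (c powr (p+1) / (p+1))) {0..c}"
    by (rule has_integral_powr_from_0[OF p c])
  have h1: "((\<lambda>x. \<bar>x\<bar> powr p) has_integral (c powr (p+1) / (p+1))) {0..c}"
    by (rule has_integral_spike_finite[OF _ _ h, of "{}"]) auto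
  have h2: "((\<lambda>x. \<bar>x\<bar> powr p) has_integral (c powr (p+1) / (p+1))) {-c..0}"
    using has_integral_reflect_real[where f="\<lambda>x. \<bar>x\<bar> powr p" and a=0 and b=c] h1 by simp
  show ?thesis using has_integral_combine[OF _ _ h2 h1] c unfolding integrable_on_def by auto
qed

lemma dist_clamp_le: "\<bar>max (-1) (min 1 u) - max (-1) (min 1 v)\<bar> \<le> \<bar>u - v\<bar>" for u v :: real
  by (auto simp: max_def min_def abs_if)

lemma has_integral_cauchy_kernel:
  assumes "Im \<zeta> \<noteq> 0"
  shows "((\<lambda>x. 1 / (\<zeta> - complex_of_real x)) has_integral (Ln (\<zeta> + 1) - Ln (\<zeta> - 1))) {-1..1}"
proof -
  have "((\<lambda>x. 1 / (\<zeta> - complex_of_real x)) has_integral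
      ((\<lambda>x. - Ln (\<zeta> - complex_of_real x)) 1 - (\<lambda>x. - Ln (\<zeta> - complex_of_real x)) (-1))) {-1..1}"
  proof (rule fundamental_theorem_of_calculus)
    fix x :: real
    have "\<zeta> - complex_of_real x \<notin> \<real>\<^sub>\<le>\<^sub>0"
      using assms by (auto simp: complex_nonpos_Reals_iff)
    then have "((\<lambda>z. - Ln (\<zeta> - z)) has_field_derivative 1 / (\<zeta> - complex_of_real x)) (at (complex_of_real x))"
      by (auto intro!: derivative_eq_intros simp: field_simps)
    then show "((\<lambda>x. - Ln (\<zeta> - complex_of_real x)) has_vector_derivative 1 / (\<zeta> - complex_of_real x))
        (at x within {-1..1})"
      by (rule has_vector_derivative_real_field)
  qed simp
  then show ?thesis
    by simp
qed

lemma Ln_minus_one_upper: "Im \<zeta> > 0 \<Longrightarrow> Ln (\<zeta> - 1) = Ln (1 - \<zeta>) + \<i> * pi"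
  using Ln_minus[of "1 - \<zeta>"] by (auto simp: complex_eq_iff)

lemma Ln_minus_one_lower: "Im \<zeta> < 0 \<Longrightarrow> Ln (\<zeta> - 1) = Ln (1 - \<zeta>) - \<i> * pi"
  using Ln_minus[of "1 - \<zeta>"] by (auto simp: complex_eq_iff)

(* The potential int mu(x) / (1 - p x) dx of (iv), written in zeta = 1/p. *)
definition zeta_potential :: "(real \<Rightarrow> real) \<Rightarrow> complex \<Rightarrow> complex" where
  "zeta_potential \<mu> \<zeta> = \<zeta> * integral {-1..1} (\<lambda>x. complex_of_real (\<mu> x) / (\<zeta> - complex_of_real x))"

locale plemelj_setting =
  fixes \<mu> :: "real \<Rightarrow> real" and K \<alpha> x0 :: real
  assumes holder: "\<And>x y. x \<in> {-1..1} \<Longrightarrow> y \<in> {-1..1} \<Longrightarrow> \<bar>\<mu> x - \<mu> y\<bar> \<le> K * \<bar>x - y\<bar> powr \<alpha>"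
    and \<alpha>: "0 < \<alpha>" "\<alpha> \<le> 1" and K: "K \<ge> 0" and x0: "x0 \<in> {-1<..<1}"
begin

definition extension :: "real \<Rightarrow> real" where
  "extension u = \<mu> (max (-1) (min 1 u))"

lemma extension_eq: "x \<in> {-1..1} \<Longrightarrow> extension x = \<mu> x"
  by (simp add: extension_def)

lemma extension_holder: "\<bar>extension u - extension v\<bar> \<le> K * \<bar>u - v\<bar> powr \<alpha>"
proof -
  have "\<bar>extension u - extension v\<bar> \<le> K * \<bar>max (-1) (min 1 u) - max (-1) (min 1 v)\<bar> powr \<alpha>"
    unfolding extension_def by (rule holder) auto
  also have "\<dots> \<le> K * \<bar>u - v\<bar> powr \<alpha>"
    using K \<alpha> by (intro mult_left_mono powr_mono2 dist_clamp_le) auto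
  finally show ?thesis .
qed

lemma continuous_on_extension: "continuous_on UNIV extension"
  by (rule holder_on_imp_continuous_on) (use \<alpha> extension_holder in \<open>auto simp: holder_on_def\<close>)

lemma continuous_on_density: "continuous_on {-1..1} \<mu>"
proof (rule holder_on_imp_continuous_on)
  show "holder_on {-1..1} \<mu>" unfolding holder_on_def
    by (rule exI[of _ K], rule exI[of _ \<alpha>]) (use \<alpha> holder in auto)
qed

(* The substitution x = Re zeta + y turns the regular part int (mu x - mu (Re zeta)) / (zeta - x) dx into an
   integral over the fixed interval [-3, 3] (enough for |Re zeta| <= 2) whose integrand is bounded by
   K |y| powr (alpha - 1) uniformly in zeta. The points y = +-1 - x0 are cut out so that the integrands
   converge at every y as zeta tends to x0. *)
definition endpoints :: "real set" where
  "endpoints = {-1 - x0, 1 - x0}"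

definition shifted_integrand :: "complex \<Rightarrow> real \<Rightarrow> complex" where
  "shifted_integrand \<zeta> y =
     (if y \<in> endpoints then 0
      else if y \<in> {-1 - Re \<zeta>..1 - Re \<zeta>}
      then complex_of_real (extension (Re \<zeta> + y) - extension (Re \<zeta>)) /
             (\<i> * complex_of_real (Im \<zeta>) - complex_of_real y)
      else 0)"

definition regular_part :: "complex \<Rightarrow> complex" where
  "regular_part \<zeta> = integral {-3..3} (shifted_integrand \<zeta>)"

lemma has_integral_regular_part:
  assumes Im: "Im \<zeta> \<noteq> 0" and Re: "\<bar>Re \<zeta>\<bar> \<le> 2"
  shows "((\<lambda>x. complex_of_real (\<mu> x - extension (Re \<zeta>)) / (\<zeta> - complex_of_real x)) has_integral
           regular_part \<zeta>) {-1..1}"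
proof -
  define a where "a = Re \<zeta>"
  define \<phi> where "\<phi> x = complex_of_real (\<mu> x - extension a) / (\<zeta> - complex_of_real x)" for x
  have nz: "\<zeta> - complex_of_real x \<noteq> 0" for x
    using Im by (auto simp: complex_eq_iff)
  have "continuous_on {-1..1} \<phi>" unfolding \<phi>_def
    using nz by (intro continuous_intros continuous_on_density) auto
  then have I: "(\<phi> has_integral integral {-1..1} \<phi>) {-1..1}"
    using integrable_continuous_interval integrable_integral by blast
  from has_integral_shift_real_ivl[OF I, of a]
  have "((\<lambda>y. \<phi> (a + y)) has_integral integral {-1..1} \<phi>) {-1 - a..1 - a}"
    by (simp add: add.commute)
  moreover have "{-1 - a..1 - a} \<inter> {-3..3} = {-1 - a..1 - a}" using Re by (auto simp: a_def)
  ultimately have J0: "((\<lambda>y. if y \<in> {-1 - a..1 - a} then \<phi> (a + y) else 0) has_integral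
      integral {-1..1} \<phi>) {-3..3}"
    using has_integral_restrict_Int[of "{-1 - a..1 - a}" "\<lambda>y. \<phi> (a + y)"] by simp
  have fin: "finite endpoints" by (simp add: endpoints_def)
  have eqs: "shifted_integrand \<zeta> y = (if y \<in> {-1 - a..1 - a} then \<phi> (a + y) else 0)"
    if "y \<in> {-3..3} - endpoints" for y
  proof (cases "y \<in> {-1 - a..1 - a}")
    case True
    then have "extension (a + y) = \<mu> (a + y)"
      by (intro extension_eq) auto
    moreover have "\<zeta> - complex_of_real (a + y) = \<i> * complex_of_real (Im \<zeta>) - complex_of_real y"
      by (simp add: a_def complex_eq_iff)
    ultimately show ?thesis
      using True that by (simp add: shifted_integrand_def \<phi>_def a_def)
  qed (use that in \<open>auto simp: shifted_integrand_def a_def\<close>)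
  have J: "(shifted_integrand \<zeta> has_integral integral {-1..1} \<phi>) {-3..3}"
    by (rule has_integral_spike_finite[OF fin eqs J0])
  then have "regular_part \<zeta> = integral {-1..1} \<phi>" unfolding regular_part_def by (rule integral_unique)
  then show ?thesis using I unfolding \<phi>_def a_def by simp
qed

definition shifted_limit :: "real \<Rightarrow> complex" where
  "shifted_limit y =
     (if y \<in> endpoints then 0
      else if y \<in> {-1 - x0<..<1 - x0}
      then complex_of_real (extension (x0 + y) - extension x0) / (- complex_of_real y)
      else 0)"

definition regular_limit :: complex where
  "regular_limit = integral {-3..3} shifted_limit"

lemma shifted_integrand_bound: "norm (shifted_integrand \<zeta> y) \<le> K * \<bar>y\<bar> powr (\<alpha> - 1)"
proof (cases "y \<notin> endpoints \<and> y \<in> {-1 - Re \<zeta>..1 - Re \<zeta>} \<and> y \<noteq> 0")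
  case False
  then have "shifted_integrand \<zeta> y = 0"
    by (auto simp: shifted_integrand_def)
  then show ?thesis
    using K by simp
next
  case True
  define w where "w = \<i> * complex_of_real (Im \<zeta>) - complex_of_real y"
  have "\<bar>y\<bar> \<le> norm w"
    using abs_Re_le_cmod[of w] by (simp add: w_def)
  have "norm (shifted_integrand \<zeta> y) = \<bar>extension (Re \<zeta> + y) - extension (Re \<zeta>)\<bar> / norm w"
    using True by (simp add: shifted_integrand_def w_def norm_divide del: of_real_diff flip: of_real_diff)
  also have "\<dots> \<le> \<bar>extension (Re \<zeta> + y) - extension (Re \<zeta>)\<bar> / \<bar>y\<bar>"
    using True \<open>\<bar>y\<bar> \<le> norm w\<close> by (intro divide_left_mono mult_pos_pos) auto
  also have "\<dots> \<le> K * \<bar>y\<bar> powr \<alpha> / \<bar>y\<bar>"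
    using extension_holder[of "Re \<zeta> + y" "Re \<zeta>"] by (intro divide_right_mono) auto
  also have "\<dots> = K * \<bar>y\<bar> powr (\<alpha> - 1)"
    using True by (simp add: powr_diff)
  finally show ?thesis .
qed

lemma shifted_integrand_integrable:
  assumes Im: "Im \<zeta> \<noteq> 0"
  shows "shifted_integrand \<zeta> integrable_on {-3..3}"
proof -
  define a where "a = Re \<zeta>"
  define \<psi> where "\<psi> y = complex_of_real (extension (a + y) - extension a) /
      (\<i> * complex_of_real (Im \<zeta>) - complex_of_real y)" for y
  have nz: "\<i> * complex_of_real (Im \<zeta>) - complex_of_real y \<noteq> 0" for y
    using Im by (auto simp: complex_eq_iff)
  have extension_cont: "continuous_on A (\<lambda>y. extension (a + y))" for A
    by (rule continuous_on_compose2[OF continuous_on_extension]) (auto intro!: continuous_intros)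
  have "continuous_on A \<psi>" for A unfolding \<psi>_def
    using nz extension_cont by (intro continuous_intros) auto
  then have "\<psi> integrable_on ({-1 - a..1 - a} \<inter> {-3..3})"
    by (simp add: Int_atLeastAtMost integrable_continuous_interval)
  then have i0: "(\<lambda>y. if y \<in> {-1 - a..1 - a} then \<psi> y else 0) integrable_on {-3..3}"
    by (simp only: integrable_restrict_Int)
  have fin: "finite endpoints" by (simp add: endpoints_def)
  have eqs: "shifted_integrand \<zeta> y = (if y \<in> {-1 - a..1 - a} then \<psi> y else 0)"
    if "y \<in> {-3..3} - endpoints" for y
    using that by (simp add: shifted_integrand_def \<psi>_def a_def)
  show ?thesis by (rule integrable_spike_finite[OF fin eqs i0])
qed

lemma isCont_extension: "isCont extension z"
  using continuous_on_extension continuous_on_eq_continuous_at open_UNIV by blast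

lemma eventually_shifted_interval_iff:
  assumes ReS: "(\<lambda>n. Re (S n)) \<longlonglongrightarrow> x0" and "y \<notin> endpoints"
  shows "eventually (\<lambda>n. y \<in> {-1 - Re (S n)..1 - Re (S n)} \<longleftrightarrow> y \<in> {-1 - x0<..<1 - x0}) sequentially"
proof -
  consider "y < -1 - x0" | "y \<in> {-1 - x0<..<1 - x0}" | "y > 1 - x0"
    using assms(2) unfolding endpoints_def by force
  then show ?thesis
  proof cases
    case 1
    then show ?thesis
      using order_tendstoD(2)[OF ReS, of "-1 - y"] by (auto elim!: eventually_mono)
  next
    case 2
    then show ?thesis
      using eventually_conj[OF order_tendstoD(1)[OF ReS, of "-1 - y"] order_tendstoD(2)[OF ReS, of "1 - y"]]
      by (auto elim!: eventually_mono)
  next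
    case 3
    then show ?thesis
      using order_tendstoD(1)[OF ReS, of "1 - y"] by (auto elim!: eventually_mono)
  qed
qed

lemma shifted_integrand_tendsto:
  assumes S: "S \<longlonglongrightarrow> complex_of_real x0"
  shows "(\<lambda>n. shifted_integrand (S n) y) \<longlonglongrightarrow> shifted_limit y"
proof (cases "y \<in> endpoints")
  case True
  then show ?thesis
    by (simp add: shifted_integrand_def shifted_limit_def)
next
  case False
  have ReS: "(\<lambda>n. Re (S n)) \<longlonglongrightarrow> x0" and ImS: "(\<lambda>n. Im (S n)) \<longlonglongrightarrow> 0"
    using tendsto_Re[OF S] tendsto_Im[OF S] by simp_all
  define g where "g n = complex_of_real (extension (Re (S n) + y) - extension (Re (S n))) /
      (\<i> * complex_of_real (Im (S n)) - complex_of_real y)" for n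
  have "(\<lambda>n. if y \<in> {-1 - x0<..<1 - x0} then g n else 0) \<longlonglongrightarrow> shifted_limit y"
  proof (cases "y \<in> {-1 - x0<..<1 - x0} \<and> y \<noteq> 0")
    case True
    have "(\<lambda>n. extension (Re (S n) + y)) \<longlonglongrightarrow> extension (x0 + y)"
      "(\<lambda>n. extension (Re (S n))) \<longlonglongrightarrow> extension x0"
      by (intro isCont_tendsto_compose[OF isCont_extension] tendsto_intros ReS)+
    then have "g \<longlonglongrightarrow> complex_of_real (extension (x0 + y) - extension x0) /
        (\<i> * complex_of_real 0 - complex_of_real y)"
      unfolding g_def using True by (intro tendsto_intros ImS) auto
    then show ?thesis
      using True False by (simp add: shifted_limit_def)
  qed (use False in \<open>auto simp: shifted_limit_def g_def\<close>)
  moreover have "eventually (\<lambda>n. (if y \<in> {-1 - x0<..<1 - x0} then g n else 0) = shifted_integrand (S n) y)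
      sequentially"
    using eventually_shifted_interval_iff[OF ReS False]
    by eventually_elim (auto simp: shifted_integrand_def g_def False)
  ultimately show ?thesis
    by (rule Lim_transform_eventually)
qed

lemma regular_part_tendsto:
  "(regular_part \<longlongrightarrow> regular_limit) (at (complex_of_real x0) within {z. Im z \<noteq> 0})"
proof (rule Lim_within_LIMSEQ, intro allI impI)
  fix S assume "(\<forall>n. S n \<noteq> complex_of_real x0 \<and> S n \<in> {z. Im z \<noteq> 0}) \<and> S \<longlonglongrightarrow> complex_of_real x0"
  then have Im: "\<And>n. Im (S n) \<noteq> 0" and S: "S \<longlonglongrightarrow> complex_of_real x0"
    by auto
  have "(\<lambda>y. K * \<bar>y\<bar> powr (\<alpha> - 1)) integrable_on {-3..3}"
    using abs_powr_integrable_on[of "\<alpha> - 1" 3] \<alpha> by (intro integrable_on_mult_right) auto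
  from dominated_convergence(2)[OF shifted_integrand_integrable[OF Im] this
      shifted_integrand_bound shifted_integrand_tendsto[OF S]]
  show "(\<lambda>n. regular_part (S n)) \<longlonglongrightarrow> regular_limit"
    by (simp add: regular_part_def regular_limit_def)
qed

lemma cauchy_integral_split:
  assumes Im: "Im \<zeta> \<noteq> 0" and Re: "\<bar>Re \<zeta>\<bar> \<le> 2"
  shows "integral {-1..1} (\<lambda>x. complex_of_real (\<mu> x) / (\<zeta> - complex_of_real x)) =
    regular_part \<zeta> + complex_of_real (extension (Re \<zeta>)) * (Ln (\<zeta> + 1) - Ln (\<zeta> - 1))"
proof -
  have "\<zeta> - complex_of_real x \<noteq> 0" for x
    using Im by (auto simp: complex_eq_iff)
  then have "(\<lambda>x. complex_of_real (\<mu> x - extension (Re \<zeta>)) / (\<zeta> - complex_of_real x)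
      + complex_of_real (extension (Re \<zeta>)) * (1 / (\<zeta> - complex_of_real x))) =
      (\<lambda>x. complex_of_real (\<mu> x) / (\<zeta> - complex_of_real x))"
    by (simp add: fun_eq_iff divide_simps)
  moreover have "((\<lambda>x. complex_of_real (\<mu> x - extension (Re \<zeta>)) / (\<zeta> - complex_of_real x)
      + complex_of_real (extension (Re \<zeta>)) * (1 / (\<zeta> - complex_of_real x))) has_integral
      regular_part \<zeta> + complex_of_real (extension (Re \<zeta>)) * (Ln (\<zeta> + 1) - Ln (\<zeta> - 1))) {-1..1}"
    by (intro has_integral_add has_integral_regular_part[OF Im Re] has_integral_mult_right
        has_integral_cauchy_kernel[OF Im])
  ultimately show ?thesis
    by (simp add: integral_unique)
qed

definition log_limit :: complex where
  "log_limit = Ln (complex_of_real (1 + x0)) - Ln (complex_of_real (1 - x0))"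

lemma log_term_tendsto: "((\<lambda>\<zeta>. Ln (\<zeta> + 1) - Ln (1 - \<zeta>)) \<longlongrightarrow> log_limit) (at (complex_of_real x0))"
proof -
  have p1: "complex_of_real x0 + 1 \<notin> \<real>\<^sub>\<le>\<^sub>0" using x0 by (auto simp: complex_nonpos_Reals_iff)
  have p2: "1 - complex_of_real x0 \<notin> \<real>\<^sub>\<le>\<^sub>0" using x0 by (auto simp: complex_nonpos_Reals_iff)
  have "isCont (\<lambda>\<zeta>. Ln (\<zeta> + 1) - Ln (1 - \<zeta>)) (complex_of_real x0)"
    using p1 p2 by (intro continuous_intros isCont_Ln') auto
  then have "((\<lambda>\<zeta>. Ln (\<zeta> + 1) - Ln (1 - \<zeta>)) \<longlongrightarrow> Ln (complex_of_real x0 + 1) - Ln (1 - complex_of_real x0)) (at (complex_of_real x0))"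
    by (simp add: isCont_def)
  moreover have "Ln (complex_of_real x0 + 1) - Ln (1 - complex_of_real x0) = log_limit"
    by (simp add: log_limit_def add.commute)
  ultimately show ?thesis by simp
qed

lemma zeta_potential_tendsto:
  assumes H: "H \<subseteq> {z. Im z \<noteq> 0}" and branch: "\<And>\<zeta>. \<zeta> \<in> H \<Longrightarrow> Ln (\<zeta> - 1) = Ln (1 - \<zeta>) + c"
  shows "(zeta_potential \<mu> \<longlongrightarrow> complex_of_real x0 * (regular_limit + complex_of_real (\<mu> x0) * (log_limit - c)))
           (at (complex_of_real x0) within H)"
proof -
  have "((\<lambda>\<zeta>. Re \<zeta>) \<longlongrightarrow> x0) (at (complex_of_real x0) within H)"
    using tendsto_Re[OF tendsto_ident_at[of "complex_of_real x0" H]] by simp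
  from isCont_tendsto_compose[OF isCont_extension this]
  have "((\<lambda>\<zeta>. extension (Re \<zeta>)) \<longlongrightarrow> \<mu> x0) (at (complex_of_real x0) within H)"
    using extension_eq[of x0] x0 by auto
  then have "((\<lambda>\<zeta>. \<zeta> * (regular_part \<zeta> + complex_of_real (extension (Re \<zeta>)) * (Ln (\<zeta> + 1) - Ln (1 - \<zeta>) - c)))
      \<longlongrightarrow> complex_of_real x0 * (regular_limit + complex_of_real (\<mu> x0) * (log_limit - c)))
      (at (complex_of_real x0) within H)"
    using tendsto_within_subset[OF regular_part_tendsto H] tendsto_within_subset[OF log_term_tendsto]
    by (intro tendsto_intros) auto
  moreover have "eventually (\<lambda>\<zeta>.
      \<zeta> * (regular_part \<zeta> + complex_of_real (extension (Re \<zeta>)) * (Ln (\<zeta> + 1) - Ln (1 - \<zeta>) - c)) =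
      zeta_potential \<mu> \<zeta>) (at (complex_of_real x0) within H)"
    unfolding eventually_at
  proof (intro exI[of _ 1] conjI ballI impI)
    fix \<zeta> assume "\<zeta> \<in> H" and "\<zeta> \<noteq> complex_of_real x0 \<and> dist \<zeta> (complex_of_real x0) < 1"
    moreover have "\<bar>Re \<zeta> - x0\<bar> \<le> dist \<zeta> (complex_of_real x0)"
      using abs_Re_le_cmod[of "\<zeta> - complex_of_real x0"] by (simp add: dist_norm)
    ultimately have "Im \<zeta> \<noteq> 0" "\<bar>Re \<zeta>\<bar> \<le> 2"
      using H x0 by auto
    then show "\<zeta> * (regular_part \<zeta> + complex_of_real (extension (Re \<zeta>)) * (Ln (\<zeta> + 1) - Ln (1 - \<zeta>) - c)) =
        zeta_potential \<mu> \<zeta>"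
      unfolding zeta_potential_def cauchy_integral_split[OF \<open>Im \<zeta> \<noteq> 0\<close> \<open>\<bar>Re \<zeta>\<bar> \<le> 2\<close>]
        branch[OF \<open>\<zeta> \<in> H\<close>]
      by (simp add: algebra_simps)
  qed simp
  ultimately show ?thesis
    by (rule Lim_transform_eventually)
qed

lemma plemelj_jump:
  "\<exists>Lp Lm. (zeta_potential \<mu> \<longlongrightarrow> Lp) (at (complex_of_real x0) within {z. Im z > 0})
     \<and> (zeta_potential \<mu> \<longlongrightarrow> Lm) (at (complex_of_real x0) within {z. Im z < 0})
     \<and> Lp - Lm = - 2 * complex_of_real pi * \<i> * complex_of_real x0 * complex_of_real (\<mu> x0)"
proof (intro exI conjI)
  show "(zeta_potential \<mu> \<longlongrightarrow>
      complex_of_real x0 * (regular_limit + complex_of_real (\<mu> x0) * (log_limit - \<i> * pi)))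
      (at (complex_of_real x0) within {z. Im z > 0})"
    by (rule zeta_potential_tendsto) (auto simp: Ln_minus_one_upper)
  show "(zeta_potential \<mu> \<longlongrightarrow>
      complex_of_real x0 * (regular_limit + complex_of_real (\<mu> x0) * (log_limit - (- \<i> * pi))))
      (at (complex_of_real x0) within {z. Im z < 0})"
    by (rule zeta_potential_tendsto) (auto simp: Ln_minus_one_lower)
qed (simp add: algebra_simps)

end

lemma holder_on_plemelj_jump:
  assumes "holder_on {-1..1} \<mu>" and "x0 \<in> {-1<..<1}"
  shows "\<exists>Lp Lm. (zeta_potential \<mu> \<longlongrightarrow> Lp) (at (complex_of_real x0) within {z. Im z > 0})
     \<and> (zeta_potential \<mu> \<longlongrightarrow> Lm) (at (complex_of_real x0) within {z. Im z < 0})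
     \<and> Lp - Lm = - 2 * complex_of_real pi * \<i> * complex_of_real x0 * complex_of_real (\<mu> x0)"
proof -
  obtain C \<alpha> where "0 < \<alpha>" "\<alpha> \<le> 1"
    and C: "\<forall>x\<in>{-1..1}. \<forall>y\<in>{-1..1}. \<bar>\<mu> x - \<mu> y\<bar> \<le> C * \<bar>x - y\<bar> powr \<alpha>"
    using assms(1) unfolding holder_on_def by blast
  have "\<bar>\<mu> x - \<mu> y\<bar> \<le> max C 0 * \<bar>x - y\<bar> powr \<alpha>" if "x \<in> {-1..1}" "y \<in> {-1..1}" for x y
    using C that by (meson max.cobounded1 mult_right_mono order_trans powr_ge_zero)
  then interpret plemelj_setting \<mu> "max C 0" \<alpha> x0
    using \<open>0 < \<alpha>\<close> \<open>\<alpha> \<le> 1\<close> assms(2) by unfold_locales auto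
  show ?thesis
    by (rule plemelj_jump)
qed

theorem mainTheorem10:
  shows
  "(\<forall>(f::complex \<Rightarrow> complex) (c::nat \<Rightarrow> complex).
      (\<forall>p\<in>ball 0 1. (\<lambda>k. c k * p ^ k) sums f p) \<longrightarrow>
      (\<forall>p\<in>ball 0 1. (\<lambda>k. complex_of_real (sqrt pi * Gamma (real k + 1) / Gamma (real k + 1/2))
                          * c k * p ^ k) sums Aop f p))
   \<and> (\<forall>(f::complex \<Rightarrow> complex) (D::complex set).
      open D \<and> ball 0 1 \<subseteq> D \<and> (\<forall>z\<in>D. closed_segment 0 z \<subseteq> D) \<and> f analytic_on D \<longrightarrow>
      Aop f analytic_on D)
   \<and> (\<forall>(x::real) (p::complex). x \<in> {-1..1} \<and> (p = 0 \<or> inverse p \<notin> complex_of_real ` {-1..1}) \<longrightarrow>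
      Aop (\<lambda>q. 1 / csqrt (1 - q * complex_of_real x)) p = 1 / (1 - p * complex_of_real x))
   \<and> (\<forall>\<mu>::real \<Rightarrow> real. holder_on {-1..1} \<mu> \<longrightarrow>
      (let Q = (\<lambda>p. integral {-1..1} (\<lambda>x. complex_of_real (\<mu> x) / csqrt (1 - p * complex_of_real x)));
           F = (\<lambda>\<zeta>. \<zeta> * integral {-1..1} (\<lambda>x. complex_of_real (\<mu> x) / (\<zeta> - complex_of_real x)))
       in (\<forall>p. (p = 0 \<or> inverse p \<notin> complex_of_real ` {-1..1}) \<longrightarrow>
               Aop Q p = integral {-1..1} (\<lambda>x. complex_of_real (\<mu> x) / (1 - p * complex_of_real x)))
        \<and> (\<forall>x0\<in>{-1<..<1} - {0::real}. \<exists>Lp Lm.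
               (F \<longlongrightarrow> Lp) (at (complex_of_real x0) within {z. Im z > 0})
             \<and> (F \<longlongrightarrow> Lm) (at (complex_of_real x0) within {z. Im z < 0})
             \<and> Lp - Lm = - 2 * complex_of_real pi * \<i> * complex_of_real x0 * complex_of_real (\<mu> x0))))"
  (is "?powser \<and> ?analytic \<and> ?kernel \<and> ?potential")
proof (intro conjI)
  show ?powser
    using Aop_powser by (simp add: abel_coeff_def)
  show ?analytic
    using Aop_analytic_on by (metis centre_in_ball subsetD zero_less_one)
  show ?kernel
    using Aop_inverse_csqrt mem_slit_plane by blast
  show ?potential
    using Aop_csqrt_potential[OF holder_on_imp_continuous_on] mem_slit_plane holder_on_plemelj_jump
    by (auto simp: Let_def zeta_potential_def[abs_def])
qed

end
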